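(* Let $K$ be a $\mathbb{Z}/2\mathbb{Z}$-pure global knot diagram in $T^2\times\mathbb{R}$ with respect to $v$. Then $pr(K)$ contains no triangle, i.e. there are no three crossings $q_1,q_2,q_3$ and three arcs of $pr(K)$ joining them pairwise whose union is a null-homotopic loop in $T^2$. In particular no Reidemeister move of type III can be performed on $K$. (This follows from the relation $[K^+_{q_3}]=\pm[K^+_{q_1}]\pm[K^+_{q_2}]$ modulo $[K]$ for such a triangle, which forbids all three classes from being nonzero in $\mathbb{Z}/2\mathbb{Z}$.)
   Context: $T^2=\mathbb{R}^2/\mathbb{Z}^2$ with fixed generators $\alpha,\beta$ of $H_1(T^2;\mathbb{Z})$; $v$ is the constant unit vector field on $T^2$ tangent to the fibres of a linear submersion $f:T^2\to S^1$ whose fibres represent $\beta$; $pr:T^2\times\mathbb{R}\to T^2$ is the projection. A knot diagram is a smooth oriented knot $K\subset T^2\times\mathbb{R}$ such that $pr|_K$ is an immersion whose only multiple points are transverse double points, called crossings. $K$ is global (with respect to $v$) if $pr(K)$ is everywhere transverse to $v$; it is oriented so that (tangent vector of $pr(K)$, $v$) is a positively oriented basis of $T^2$. For a crossing $p$, smoothing $pr(K)$ at $p$ respecting orientations yields two oriented loops $K_p^+,K_p^-$ with $[K_p^+]+[K_p^-]=[K]$ in $H_1(T^2;\mathbb{Z})$. A global knot diagram $K$ is $\mathbb{Z}/2\mathbb{Z}$-pure if (1) $H_1(T^2;\mathbb{Z})/\langle[K]\rangle\cong\mathbb{Z}$, and (2) for every crossing $p$ the class of $K_p^+$ (equivalently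 of $K_p^-$) is nonzero in $G=(H_1(T^2;\mathbb{Z})/\langle[K]\rangle)\otimes\mathbb{Z}/2\mathbb{Z}\cong\mathbb{Z}/2\mathbb{Z}$. *)

theory Defs
  imports "HOL-Analysis.Analysis" "HOL-Algebra.Elementary_Groups" "HOL-Algebra.Generated_Groups"
begin

(* ------------------------------------------------------------------
   The torus T^2 = R^2/Z^2, realised concretely as S^1 x S^1 inside C x C
   via the covering map  E(x,y) = (exp(2 pi i x), exp(2 pi i y)).
   H_1(T^2;Z) is identified with Z^2 = int x int in the standard way
   (class of a loop = displacement of a lift).
   ------------------------------------------------------------------ *)

definition torusE :: "real \<times> real \<Rightarrow> complex \<times> complex" where
  "torusE p = (cis (2 * pi * fst p), cis (2 * pi * snd p))"

definition torus :: "(complex \<times> complex) set" where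
  "torus = range torusE"

definition intpt :: "real \<times> real \<Rightarrow> int \<times> int" where
  "intpt p = (round (fst p), round (snd p))"

definition det2 :: "real \<times> real \<Rightarrow> real \<times> real \<Rightarrow> real" where
  "det2 u w = fst u * snd w - snd u * fst w"

definition smooth_curve :: "(real \<Rightarrow> 'a::real_normed_vector) \<Rightarrow> bool" where
  "smooth_curve f \<longleftrightarrow>
     (\<exists>D :: nat \<Rightarrow> real \<Rightarrow> 'a. D 0 = f \<and>
        (\<forall>n t. (D n has_vector_derivative D (Suc n) t) (at t)))"

(* ------------------------------------------------------------------
   A knot K in T^2 x R is given by a 1-periodic parametrisation
   t |-> (torusE (c t), h t), where c : R -> R^2 is a lift of pr(K).
   ------------------------------------------------------------------ *)

definition is_crossing :: "(real \<Rightarrow> real \<times> real) \<Rightarrow> real \<Rightarrow> real \<Rightarrow> bool" where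
  "is_crossing c s t \<longleftrightarrow> s - t \<notin> \<int> \<and> torusE (c s) = torusE (c t)"

definition knot_diagram :: "(real \<Rightarrow> real \<times> real) \<Rightarrow> (real \<Rightarrow> real) \<Rightarrow> bool" where
  "knot_diagram c h \<longleftrightarrow>
     smooth_curve c \<and> smooth_curve h \<and>
     (\<forall>t. torusE (c (t + 1)) = torusE (c t) \<and> h (t + 1) = h t) \<and>
     \<comment> \<open>K is embedded: the parametrisation is injective on R/Z\<close>
     (\<forall>s t. torusE (c s) = torusE (c t) \<and> h s = h t \<longrightarrow> s - t \<in> \<int>) \<and>
     \<comment> \<open>pr restricted to K is an immersion\<close>
     (\<forall>t. vector_derivative c (at t) \<noteq> 0) \<and>
     \<comment> \<open>no triple points\<close>
     (\<forall>s t u. is_crossing c s t \<and> is_crossing c t u \<longrightarrow> s - u \<in> \<int>) \<and>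
     \<comment> \<open>double points are transverse\<close>
     (\<forall>s t. is_crossing c s t \<longrightarrow>
        det2 (vector_derivative c (at s)) (vector_derivative c (at t)) \<noteq> 0)"

definition knot_class :: "(real \<Rightarrow> real \<times> real) \<Rightarrow> int \<times> int" where
  "knot_class c = intpt (c 1 - c 0)"

(* For a crossing given by parameters s,t, smoothing at it yields the loops
   "K from s to t" and "K from t to s+1"; the class of the first one is: *)
definition smoothing_class :: "(real \<Rightarrow> real \<times> real) \<Rightarrow> real \<Rightarrow> real \<Rightarrow> int \<times> int" where
  "smoothing_class c s t = intpt (c t - c s)"

(* global with respect to v, with the orientation convention
   (tangent vector of pr(K), v) positively oriented *)
definition global_wrt :: "real \<times> real \<Rightarrow> (real \<Rightarrow> real \<times> real) \<Rightarrow> bool" where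
  "global_wrt v c \<longleftrightarrow> (\<forall>t. det2 (vector_derivative c (at t)) v > 0)"

definition Z2_group :: "(int \<times> int) monoid" where
  "Z2_group = DirProd integer_group integer_group"

(* x is nonzero in G = (Z^2/<k>) tensor Z/2 = Z^2/(<k> + 2 Z^2) *)
definition nonzero_in_G :: "int \<times> int \<Rightarrow> int \<times> int \<Rightarrow> bool" where
  "nonzero_in_G k x \<longleftrightarrow>
     \<not> (\<exists>(m::int) (y::int \<times> int). x = (m * fst k + 2 * fst y, m * snd k + 2 * snd y))"

definition Z2_pure :: "(real \<Rightarrow> real \<times> real) \<Rightarrow> bool" where
  "Z2_pure c \<longleftrightarrow>
     (Z2_group Mod (generate Z2_group {knot_class c}) \<cong> integer_group) \<and>
     (\<forall>s t. is_crossing c s t \<longrightarrow> nonzero_in_G (knot_class c) (smoothing_class c s t))"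

(* pr(K) contains a triangle: crossings q1 = E(c r3) = E(c p1), q2 = E(c r1) = E(c p2),
   q3 = E(c r2) = E(c p3), pairwise distinct; arcs of pr(K) given by the parameter
   intervals between p_i and r_i (traversed in either direction, proper sub-arcs);
   at each corner the loop switches branch (the two parameters form a crossing);
   the concatenated loop is null-homotopic in T^2. *)
definition has_triangle :: "(real \<Rightarrow> real \<times> real) \<Rightarrow> bool" where
  "has_triangle c \<longleftrightarrow>
     (\<exists>p1 r1 p2 r2 p3 r3.
        is_crossing c r3 p1 \<and> is_crossing c r1 p2 \<and> is_crossing c r2 p3 \<and>
        torusE (c p1) \<noteq> torusE (c p2) \<and> torusE (c p2) \<noteq> torusE (c p3) \<and>
        torusE (c p1) \<noteq> torusE (c p3) \<and>
        \<bar>r1 - p1\<bar> < 1 \<and> \<bar>r2 - p2\<bar> < 1 \<and> \<bar>r3 - p3\<bar> < 1 \<and>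
        (\<exists>z. homotopic_loops torus
               (subpath p1 r1 (torusE \<circ> c) +++ subpath p2 r2 (torusE \<circ> c)
                  +++ subpath p3 r3 (torusE \<circ> c))
               (linepath z z)))"

end

theory Submission
  imports Defs "HOL-Complex_Analysis.Complex_Analysis"
begin

(* A null-homotopic loop in T^2 lifts to a closed loop in R^2. For a triangle with corners
   q1, q2, q3 this says that the three displacements of the lift along the arcs add up to 0;
   since each jump of the lift at a corner is the integer class of a smoothing, the classes
   N1, N2, N3 of the three smoothings satisfy N1 + N2 + N3 = 0 in Z^2. Because Z^2/<[K]> is
   infinite cyclic and [K] is nonzero, [K] is not divisible by 2, so G = Z^2/(<[K]> + 2 Z^2)
   has order 2, and the elements of Z^2/2Z^2 that are nonzero in G are x and x + [K] for a
   single x.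
   A sum of three such classes is x modulo <[K]> and 2 Z^2, so it cannot vanish. *)

lemma cis_2pi_eq_imp_diff_Ints:
  assumes "cis (2 * pi * x) = cis (2 * pi * y)"
  shows "x - y \<in> \<int>"
proof -
  have "cis (2 * pi * (x - y)) = 1"
    using assms cis_divide[of "2 * pi * x" "2 * pi * y"] by (simp add: right_diff_distrib)
  then have "cos (2 * pi * (x - y)) = 1"
    by (metis Re_complex_of_real cis.sel(1) one_complex.simps(1))
  then obtain n :: int where "2 * pi * (x - y) = n * 2 * pi"
    by (auto simp: cos_one_2pi_int)
  then have "x - y = n" by simp
  then show ?thesis by simp
qed

lemma smoothing_class_lift_difference:
  assumes "torusE (c t) = torusE (c s)"
  shows "c t - c s = map_prod of_int of_int (smoothing_class c s t)"
proof -
  from assms have "fst (c t - c s) \<in> \<int>" "snd (c t - c s) \<in> \<int>"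
    by (auto simp: torusE_def intro: cis_2pi_eq_imp_diff_Ints)
  then show ?thesis
    by (auto simp: smoothing_class_def intpt_def prod_eq_iff elim!: Ints_cases)
qed

lemma continuous_on_UNIV_imp_path_subpath:
  assumes "continuous_on UNIV g"
  shows "path (subpath a b g)"
  unfolding path_def subpath_def
  by (rule continuous_on_compose2[OF assms]) (auto intro!: continuous_intros)

lemma winding_number_subpath_cis:
  assumes "continuous_on UNIV f"
  shows "winding_number (subpath a b (\<lambda>t. cis (2 * pi * f t))) 0 = of_real (f b - f a)"
proof -
  define q where "q = (\<lambda>t. \<i> * of_real (2 * pi * f t))"
  have "continuous_on UNIV q"
    unfolding q_def by (intro continuous_intros continuous_on_compose2[OF assms]) auto
  then have "path (subpath a b q)"
    by (rule continuous_on_UNIV_imp_path_subpath)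
  have "subpath a b (\<lambda>t. cis (2 * pi * f t)) = exp \<circ> subpath a b q"
    by (auto simp: q_def subpath_def cis_conv_exp)
  then have "winding_number (subpath a b (\<lambda>t. cis (2 * pi * f t))) 0
      = (q b - q a) / (2 * of_real pi * \<i>)"
    using winding_number_compose_exp[OF \<open>path (subpath a b q)\<close>] by simp
  also have "\<dots> = of_real (f b - f a)"
    by (simp add: q_def field_simps)
  finally show ?thesis .
qed

lemma winding_number_null_homotopic_image:
  assumes "homotopic_loops S \<gamma> (linepath z z)"
    and "continuous_on S P" and "P ` S \<subseteq> - {0}"
  shows "winding_number (P \<circ> \<gamma>) 0 = 0"
proof -
  have "homotopic_loops (- {0}) (P \<circ> \<gamma>) (P \<circ> linepath z z)"
    using assms by (intro homotopic_loops_continuous_image) auto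
  moreover have "P \<circ> linepath z z = linepath (P z) (P z)"
    by (simp add: linepath_refl o_def)
  moreover have "z \<in> S"
    using homotopic_loops_imp_subset[OF assms(1)] by (simp add: linepath_refl)
  then have "0 \<noteq> P z"
    using assms(3) by auto
  ultimately show ?thesis
    by (simp add: winding_number_homotopic_loops)
qed

lemma winding_number_join3_subpaths_cis:
  fixes f :: "real \<Rightarrow> real"
  defines "\<gamma> \<equiv> \<lambda>t. cis (2 * pi * f t)"
  assumes f: "continuous_on UNIV f" and "\<gamma> r1 = \<gamma> p2" and "\<gamma> r2 = \<gamma> p3"
  shows "winding_number (subpath p1 r1 \<gamma> +++ subpath p2 r2 \<gamma> +++ subpath p3 r3 \<gamma>) 0
           = of_real ((f r1 - f p1) + (f r2 - f p2) + (f r3 - f p3))"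
proof -
  have "continuous_on UNIV \<gamma>"
    unfolding \<gamma>_def by (intro continuous_intros continuous_on_compose2[OF f]) auto
  then have path: "path (subpath a b \<gamma>)" for a b
    by (rule continuous_on_UNIV_imp_path_subpath)
  have nonzero: "0 \<notin> path_image (subpath a b \<gamma>)" for a b
    by (auto simp: path_image_def subpath_def \<gamma>_def)
  have "winding_number (subpath p1 r1 \<gamma> +++ subpath p2 r2 \<gamma> +++ subpath p3 r3 \<gamma>) 0
      = winding_number (subpath p1 r1 \<gamma>) 0
        + (winding_number (subpath p2 r2 \<gamma>) 0 + winding_number (subpath p3 r3 \<gamma>) 0)"
    using path nonzero assms(3,4)
    by (simp add: winding_number_join path_image_join)
  then show ?thesis
    unfolding \<gamma>_def winding_number_subpath_cis[OF f] by simp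
qed

lemma null_homotopic_triangle_circle_coordinate:
  assumes null: "homotopic_loops S (subpath p1 r1 g +++ subpath p2 r2 g +++ subpath p3 r3 g)
                   (linepath z z)"
    and "continuous_on S P" and "P ` S \<subseteq> - {0}"
    and "continuous_on UNIV f" and coord: "\<And>t. P (g t) = cis (2 * pi * f t)"
    and "g r1 = g p2" and "g r2 = g p3"
  shows "(f r1 - f p1) + (f r2 - f p2) + (f r3 - f p3) = 0"
proof -
  define \<gamma> where "\<gamma> = (\<lambda>t. cis (2 * pi * f t))"
  have "P \<circ> g = \<gamma>"
    by (auto simp: \<gamma>_def coord)
  then have "P \<circ> (subpath p1 r1 g +++ subpath p2 r2 g +++ subpath p3 r3 g)
      = subpath p1 r1 \<gamma> +++ subpath p2 r2 \<gamma> +++ subpath p3 r3 \<gamma>"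
    by (simp add: path_compose_join subpath_image[symmetric])
  moreover have "\<gamma> r1 = \<gamma> p2" "\<gamma> r2 = \<gamma> p3"
    using \<open>P \<circ> g = \<gamma>\<close> assms(6,7) by (metis comp_apply)+
  ultimately have "of_real ((f r1 - f p1) + (f r2 - f p2) + (f r3 - f p3)) = (0 :: complex)"
    using winding_number_null_homotopic_image[OF null assms(2,3)]
      winding_number_join3_subpaths_cis[OF assms(4)] unfolding \<gamma>_def by simp
  then show ?thesis
    by (simp only: of_real_eq_0_iff)
qed

lemma null_homotopic_triangle_lift_closes:
  assumes "continuous_on UNIV c"
    and "torusE (c r1) = torusE (c p2)" and "torusE (c r2) = torusE (c p3)"
    and null: "homotopic_loops torus
        (subpath p1 r1 (torusE \<circ> c) +++ subpath p2 r2 (torusE \<circ> c) +++ subpath p3 r3 (torusE \<circ> c))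
        (linepath z z)"
  shows "(c r1 - c p1) + (c r2 - c p2) + (c r3 - c p3) = 0"
proof -
  have "continuous_on UNIV (\<lambda>t. fst (c t))" "continuous_on UNIV (\<lambda>t. snd (c t))"
    using assms(1) by (auto intro!: continuous_intros)
  moreover have "continuous_on torus fst" "continuous_on torus snd"
    by (intro continuous_intros)+
  moreover have "fst ` torus \<subseteq> - {0}" "snd ` torus \<subseteq> - {0}"
    by (auto simp: torus_def torusE_def)
  ultimately have "(fst (c r1) - fst (c p1)) + (fst (c r2) - fst (c p2)) + (fst (c r3) - fst (c p3)) = 0"
    and "(snd (c r1) - snd (c p1)) + (snd (c r2) - snd (c p2)) + (snd (c r3) - snd (c p3)) = 0"
    using assms(2,3)
      null_homotopic_triangle_circle_coordinate[OF null, where P = fst and f = "\<lambda>t. fst (c t)"]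
      null_homotopic_triangle_circle_coordinate[OF null, where P = snd and f = "\<lambda>t. snd (c t)"]
    by (auto simp: torusE_def)
  then show ?thesis
    by (simp add: prod_eq_iff)
qed

lemma carrier_Z2_group [simp]: "carrier Z2_group = UNIV"
  by (simp add: Z2_group_def)

lemma one_Z2_group [simp]: "\<one>\<^bsub>Z2_group\<^esub> = 0"
  by (simp add: Z2_group_def DirProd_def zero_prod_def)

lemma mult_Z2_group [simp]: "x \<otimes>\<^bsub>Z2_group\<^esub> y = x + y"
  by (simp add: Z2_group_def DirProd_def plus_prod_def split: prod.splits)

lemma group_Z2_group: "group Z2_group"
  unfolding Z2_group_def by (intro DirProd_group group_integer_group)

lemma inv_Z2_group [simp]: "inv\<^bsub>Z2_group\<^esub> x = - x"
  by (rule group.inv_equality[OF group_Z2_group]) auto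

lemma comm_group_Z2_group: "comm_group Z2_group"
  by (rule group.group_comm_groupI[OF group_Z2_group]) (auto simp: add.commute)

lemma generate_Z2_group_singleton: "generate Z2_group {k} \<subseteq> range (\<lambda>m. (m * fst k, m * snd k))"
proof
  fix x assume "x \<in> generate Z2_group {k}"
  then show "x \<in> range (\<lambda>m. (m * fst k, m * snd k))"
  proof (induction rule: generate.induct)
    case one
    show ?case by (auto simp: zero_prod_def intro!: range_eqI[of _ _ 0])
  next
    case (incl h)
    then show ?case by (auto intro!: range_eqI[of _ _ 1])
  next
    case (inv h)
    then show ?case by (auto simp: uminus_prod_def intro!: range_eqI[of _ _ "-1"])
  next
    case (eng h1 h2)
    then obtain m1 m2 where "h1 = (m1 * fst k, m1 * snd k)" "h2 = (m2 * fst k, m2 * snd k)"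
      by auto
    then show ?case by (auto intro!: range_eqI[of _ _ "m1 + m2"] simp: algebra_simps)
  qed
qed

lemma (in group) iso_integer_group_square_eq_one:
  assumes "G \<cong> integer_group" and x: "x \<in> carrier G" and "x \<otimes> x = \<one>"
  shows "x = \<one>"
proof -
  obtain \<phi> where \<phi>: "\<phi> \<in> iso G integer_group"
    using assms(1) by (auto simp: is_iso_def)
  then have hom: "\<phi> \<in> hom G integer_group"
    by (rule iso_imp_homomorphism)
  have "\<phi> x + \<phi> x = \<phi> \<one>"
    using hom_mult[OF hom x x] assms(3) by simp
  moreover have "\<phi> \<one> = 0"
    using hom_one[OF hom is_group group_integer_group] by simp
  ultimately have "\<phi> x = \<phi> \<one>"
    by simp
  then show ?thesis
    using \<phi> x by (auto simp: iso_iff inj_on_def)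
qed

lemma Z2_quotient_iso_integer_group_imp_odd:
  assumes iso: "Z2_group Mod generate Z2_group {k} \<cong> integer_group" and "k \<noteq> 0"
  shows "odd (fst k) \<or> odd (snd k)"
proof (rule ccontr)
  assume "\<not> ?thesis"
  then obtain a b where k: "k = (2 * a, 2 * b)"
    by (metis evenE prod.collapse)
  define H where "H = generate Z2_group {k}"
  interpret Z2: comm_group Z2_group
    by (rule comm_group_Z2_group)
  have H: "subgroup H Z2_group"
    unfolding H_def by (rule Z2.generate_is_subgroup) simp
  then interpret normal H Z2_group
    by (rule Z2.subgroup_imp_normal)
  have "k \<in> H"
    unfolding H_def by (rule generate.incl) simp
  have "(a, b) \<notin> H"
  proof
    assume "(a, b) \<in> H"
    then obtain m where "a = m * (2 * a)" "b = m * (2 * b)"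
      using generate_Z2_group_singleton[of k] k unfolding H_def by auto
    then have "a * (1 - 2 * m) = 0" "b * (1 - 2 * m) = 0"
      by (auto simp: algebra_simps)
    moreover have "1 - 2 * m \<noteq> 0"
      by presburger
    ultimately show False
      using \<open>k \<noteq> 0\<close> k by (simp add: zero_prod_def)
  qed
  \<comment> \<open>The coset of k/2 is an element of order 2 in Z^2/<k>, which is impossible in Z.\<close>
  define X where "X = H #>\<^bsub>Z2_group\<^esub> (a, b)"
  have "X \<in> carrier (Z2_group Mod H)"
    unfolding X_def carrier_FactGroup by auto
  moreover have "X \<otimes>\<^bsub>Z2_group Mod H\<^esub> X = \<one>\<^bsub>Z2_group Mod H\<^esub>"
  proof -
    have "X \<otimes>\<^bsub>Z2_group Mod H\<^esub> X = H #>\<^bsub>Z2_group\<^esub> ((a, b) + (a, b))"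
      unfolding X_def mult_FactGroup by (simp add: rcos_sum)
    also have "\<dots> = H"
      using k subgroup.rcos_const[OF H Z2.is_group \<open>k \<in> H\<close>] by simp
    finally show ?thesis by simp
  qed
  ultimately have "X = H"
    using group.iso_integer_group_square_eq_one[OF factorgroup_is_group] iso
    by (simp add: H_def)
  then show False
    using Z2.rcos_self[OF _ H, of "(a, b)"] \<open>(a, b) \<notin> H\<close> unfolding X_def by auto
qed

lemma nonzero_in_G_parity:
  assumes "nonzero_in_G k x"
  shows "odd (fst x) \<or> odd (snd x)" and "odd (fst x - fst k) \<or> odd (snd x - snd k)"
proof -
  have not_witness: "x \<noteq> (m * fst k + 2 * fst y, m * snd k + 2 * snd y)" for m y
    using assms unfolding nonzero_in_G_def by blast
  show "odd (fst x) \<or> odd (snd x)"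
    using not_witness[of 0 "(fst x div 2, snd x div 2)"] by (auto simp: prod_eq_iff)
  show "odd (fst x - fst k) \<or> odd (snd x - snd k)"
    using not_witness[of 1 "((fst x - fst k) div 2, (snd x - snd k) div 2)"]
    by (simp add: prod_eq_iff) presburger
qed

lemma nonzero_in_G_sum3_nonzero:
  assumes "odd (fst k) \<or> odd (snd k)"
    and "nonzero_in_G k x" and "nonzero_in_G k y" and "nonzero_in_G k w"
  shows "x + y + w \<noteq> 0"
proof
  assume "x + y + w = 0"
  then have "fst x + fst y + fst w = 0" "snd x + snd y + snd w = 0"
    by (simp_all add: prod_eq_iff)
  then show False
    using assms(1) nonzero_in_G_parity[OF assms(2)] nonzero_in_G_parity[OF assms(3)]
      nonzero_in_G_parity[OF assms(4)]
    by presburger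
qed

lemma smooth_curve_has_vector_derivative:
  assumes "smooth_curve c"
  obtains D where "\<And>t. (c has_vector_derivative D t) (at t)"
  using assms unfolding smooth_curve_def by metis

lemma smooth_curve_continuous:
  assumes "smooth_curve c"
  shows "continuous_on UNIV c"
  using smooth_curve_has_vector_derivative[OF assms]
  by (meson continuous_at_imp_continuous_on has_vector_derivative_continuous)

lemma global_wrt_det2_strict_mono:
  assumes "smooth_curve c" and "global_wrt v c" and "s < t"
  shows "det2 (c s) v < det2 (c t) v"
proof -
  obtain D where D: "\<And>t. (c has_vector_derivative D t) (at t)"
    using smooth_curve_has_vector_derivative[OF assms(1)] by blast
  have "bounded_linear (\<lambda>u. det2 u v)"
    unfolding det2_def by (intro bounded_linear_intros)
  then have "((\<lambda>t. det2 (c t) v) has_real_derivative det2 (D t) v) (at t)" for t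
    unfolding has_real_derivative_iff_has_vector_derivative
    by (rule bounded_linear.has_vector_derivative[OF _ D])
  moreover have "det2 (D t) v > 0" for t
    using assms(2) D unfolding global_wrt_def by (metis vector_derivative_at)
  ultimately show ?thesis
    using DERIV_pos_imp_increasing[OF assms(3)] by blast
qed

lemma global_knot_class_nonzero:
  assumes "knot_diagram c h" and "global_wrt v c"
  shows "knot_class c \<noteq> 0"
proof
  assume "knot_class c = 0"
  have "torusE (c 1) = torusE (c 0)"
    using assms(1) unfolding knot_diagram_def by (metis add_0)
  then have "c 1 - c 0 = map_prod of_int of_int (knot_class c)"
    unfolding knot_class_def by (rule smoothing_class_lift_difference[unfolded smoothing_class_def])
  with \<open>knot_class c = 0\<close> have "c 1 = c 0"
    by (simp add: zero_prod_def prod_eq_iff)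
  moreover have "smooth_curve c"
    using assms(1) by (simp add: knot_diagram_def)
  then have "det2 (c 0) v < det2 (c 1) v"
    using assms(2) by (rule global_wrt_det2_strict_mono) simp
  ultimately show False
    by simp
qed

theorem mainTheorem5:
  fixes c :: "real \<Rightarrow> real \<times> real" and h :: "real \<Rightarrow> real"
    and \<alpha> \<beta> :: "int \<times> int" and v :: "real \<times> real" and \<sigma> :: real
  assumes basis: "fst \<alpha> * snd \<beta> - snd \<alpha> * fst \<beta> \<in> {1, -1}"
    and sigma: "\<sigma> \<in> {1, -1}"
    and v_def: "v = (\<sigma> / norm (real_of_int (fst \<beta>), real_of_int (snd \<beta>)))
                     *\<^sub>R (real_of_int (fst \<beta>), real_of_int (snd \<beta>))"
    and diagram: "knot_diagram c h"
    and global: "global_wrt v c"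
    and pure: "Z2_pure c"
  shows "\<not> has_triangle c"
proof
  assume "has_triangle c"
  then obtain p1 r1 p2 r2 p3 r3 z where
    c1: "is_crossing c r3 p1" and c2: "is_crossing c r1 p2" and c3: "is_crossing c r2 p3" and
    null: "homotopic_loops torus
      (subpath p1 r1 (torusE \<circ> c) +++ subpath p2 r2 (torusE \<circ> c) +++ subpath p3 r3 (torusE \<circ> c))
      (linepath z z)"
    unfolding has_triangle_def by blast
  have "continuous_on UNIV c"
    using diagram by (simp add: knot_diagram_def smooth_curve_continuous)
  then have "(c r1 - c p1) + (c r2 - c p2) + (c r3 - c p3) = 0"
    using c2 c3 null by (intro null_homotopic_triangle_lift_closes) (auto simp: is_crossing_def)
  moreover have "c p2 - c r1 = map_prod of_int of_int (smoothing_class c r1 p2)"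
    and "c p3 - c r2 = map_prod of_int of_int (smoothing_class c r2 p3)"
    and "c p1 - c r3 = map_prod of_int of_int (smoothing_class c r3 p1)"
    using c1 c2 c3 by (auto simp: is_crossing_def intro!: smoothing_class_lift_difference)
  ultimately have "smoothing_class c r1 p2 + smoothing_class c r2 p3 + smoothing_class c r3 p1 = 0"
    by (simp add: prod_eq_iff of_int_eq_iff[symmetric])
  moreover have "odd (fst (knot_class c)) \<or> odd (snd (knot_class c))"
    using pure global_knot_class_nonzero[OF diagram global] Z2_quotient_iso_integer_group_imp_odd
    unfolding Z2_pure_def by blast
  ultimately show False
    using pure c1 c2 c3 nonzero_in_G_sum3_nonzero unfolding Z2_pure_def by blast
qed

end
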